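(* \[ \frac{7\zeta(3)}{2}=\sum_{n=0}^{\infty}\left(\frac14\right)^n\frac{(1)_n^3}{\left(\frac32\right)_n^3}\Big((6n+4)\,O_{n+1}-1\Big). \]
   Context: $(x)_n=x(x+1)\cdots(x+n-1)$ is the Pochhammer symbol, with $(x)_0=1$. $O_m=\sum_{j=1}^{m}\frac{1}{2j-1}$ is the $m$-th odd harmonic number. $\zeta(3)=\sum_{j\ge1}j^{-3}$ is Apéry's constant. *)

theory Defs
  imports "HOL-Analysis.Analysis"
begin

definition odd_harmonic :: "nat \<Rightarrow> real" where
  "odd_harmonic m = (\<Sum>j=1..m. 1 / (2 * real j - 1))"

definition apery_zeta3 :: real where
  "apery_zeta3 = (\<Sum>j. 1 / (real (Suc j)) ^ 3)"

end

theory Submission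
  imports Defs "HOL-Real_Asymp.Real_Asymp"
begin

text \<open>
  The series is the value at a = 1/2 of U(a) = \<Sum>_n F(a,n), where
  F(a,n) = w(a,n) ((3n + 1 + 2a) H(a,n) - 1), w(a,n) = 4^(-n) n!^3 / ((3/2)_n (a)_(n+1)^2) and
  H(a,n) = \<Sum>_(j\<le>n) 1/(a + j). With G(a,n) = 2 (2n + 1) w(a,n) H(a,n) this is a
  Wilf--Zeilberger pair: G(a,n+1) - G(a,n) = F(a+1,n) - F(a,n). Summing over n telescopes to
  U(a) - U(a+1) = G(a,0) = 2/a^3, and since U(a) tends to 0 as a grows, telescoping once more over
  a = 1/2, 3/2, ... gives U(1/2) = \<Sum>_k 16/(2k+1)^3 = 14 \<zeta>(3).
\<close>

definition wz_weight :: "real \<Rightarrow> nat \<Rightarrow> real" where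
  "wz_weight a n = (1/4)^n * fact n ^ 3 / (pochhammer (3/2) n * pochhammer a (Suc n) ^ 2)"

definition shifted_harmonic :: "real \<Rightarrow> nat \<Rightarrow> real" where
  "shifted_harmonic a n = (\<Sum>j\<le>n. 1 / (a + real j))"

definition wz_F :: "real \<Rightarrow> nat \<Rightarrow> real" where
  "wz_F a n = wz_weight a n * ((3 * real n + 1 + 2 * a) * shifted_harmonic a n - 1)"

definition wz_G :: "real \<Rightarrow> nat \<Rightarrow> real" where
  "wz_G a n = 2 * (2 * real n + 1) * wz_weight a n * shifted_harmonic a n"

lemma wz_weight_pos: "a > 0 \<Longrightarrow> wz_weight a n > 0"
  unfolding wz_weight_def by (intro divide_pos_pos mult_pos_pos zero_less_power pochhammer_pos) auto

lemma wz_weight_0: "wz_weight a 0 = 1 / a^2"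
  by (simp add: wz_weight_def)

lemma wz_weight_Suc:
  "wz_weight a (Suc n)
     = wz_weight a n * ((real n + 1)^3 / (2 * (2 * real n + 3) * (a + real n + 1)^2))"
proof -
  have "pochhammer a (Suc (Suc n)) = pochhammer a (Suc n) * (a + real n + 1)"
    "pochhammer (3/2) (Suc n) = pochhammer (3/2) n * (real n + 3/2)"
    "fact (Suc n) = fact n * (real n + 1)"
    by (simp_all add: pochhammer_Suc[of _ "Suc n"] pochhammer_Suc[of "3/2"] algebra_simps)
  then have "wz_weight a (Suc n)
      = wz_weight a n * ((real n + 1)^3 / (4 * (real n + 3/2) * (a + real n + 1)^2))"
    unfolding wz_weight_def by (simp add: power_mult_distrib mult_ac) (simp add: algebra_simps)
  also have "4 * (real n + 3/2) = 2 * (2 * real n + 3)"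
    by simp
  finally show ?thesis .
qed

lemma wz_weight_shift:
  assumes "a > 0"
  shows "wz_weight (a + 1) n = wz_weight a n * (a^2 / (a + real n + 1)^2)"
proof -
  have "a * pochhammer (a + 1) (Suc n) = pochhammer a (Suc n) * (a + real n + 1)"
    by (metis pochhammer_Suc pochhammer_rec add.commute add.left_commute of_nat_Suc)
  then have "pochhammer (a + 1) (Suc n) = pochhammer a (Suc n) * ((a + real n + 1) / a)"
    using assms by (simp add: field_simps)
  then show ?thesis
    unfolding wz_weight_def by (simp add: power_mult_distrib power_divide mult_ac)
qed

lemma wz_weight_ratio_le:
  assumes "a \<ge> 0"
  shows "(real n + 1)^3 / (2 * (2 * real n + 3) * (a + real n + 1)^2) \<le> 1/4"
proof -
  have "(real n + 1)^3 = (real n + 1) * (real n + 1)^2"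
    by (simp add: power3_eq_cube power2_eq_square)
  also have "\<dots> \<le> (real n + 3/2) * (a + real n + 1)^2"
    using assms by (intro mult_mono power_mono) auto
  also have "\<dots> = 1/4 * (2 * (2 * real n + 3) * (a + real n + 1)^2)"
    by (simp add: field_simps)
  finally have "(real n + 1)^3 \<le> 1/4 * (2 * (2 * real n + 3) * (a + real n + 1)^2)" .
  moreover have "0 < 2 * (2 * real n + 3) * (a + real n + 1)^2"
    using assms by simp
  ultimately show ?thesis
    by (simp only: pos_divide_le_eq)
qed

lemma wz_weight_le:
  assumes "a > 0"
  shows "wz_weight a n \<le> (1/4)^n / a^2"
proof (induction n)
  case 0
  show ?case by (simp add: wz_weight_0)
next
  case (Suc n)
  have "wz_weight a (Suc n) \<le> wz_weight a n * (1/4)"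
    unfolding wz_weight_Suc
    using wz_weight_pos[OF assms] wz_weight_ratio_le assms
    by (intro mult_left_mono) (auto intro: less_imp_le)
  also have "\<dots> \<le> (1/4)^Suc n / a^2"
    using Suc.IH by simp
  finally show ?case .
qed

lemma shifted_harmonic_Suc:
  "shifted_harmonic a (Suc n) = shifted_harmonic a n + 1 / (a + real n + 1)"
  by (simp add: shifted_harmonic_def add.assoc)

lemma shifted_harmonic_shift:
  "shifted_harmonic (a + 1) n = shifted_harmonic a n - 1 / a + 1 / (a + real n + 1)"
  by (induction n) (simp_all add: shifted_harmonic_Suc shifted_harmonic_def algebra_simps)

lemma shifted_harmonic_ge:
  assumes "a > 0"
  shows "shifted_harmonic a n \<ge> 1 / a"
proof (induction n)
  case 0
  show ?case by (simp add: shifted_harmonic_def)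
next
  case (Suc n)
  then show ?case
    unfolding shifted_harmonic_Suc using assms by (intro add_increasing2) auto
qed

lemma shifted_harmonic_pos: "a > 0 \<Longrightarrow> shifted_harmonic a n > 0"
  using shifted_harmonic_ge[of a n] by (smt (verit) divide_pos_pos)

lemma shifted_harmonic_le:
  assumes "a > 0"
  shows "shifted_harmonic a n \<le> (real n + 1) / a"
proof -
  have "shifted_harmonic a n \<le> (\<Sum>j\<le>n. 1 / a)"
    unfolding shifted_harmonic_def using assms by (intro sum_mono frac_le) auto
  then show ?thesis by (simp add: add.commute)
qed

lemma wz_G_Suc_minus_wz_G:
  assumes "a > 0"
  shows "wz_G a (Suc n) - wz_G a n = wz_F (a + 1) n - wz_F a n"
proof -
  define r where "r = a + real n + 1"
  define c where "c = 2 * (2 * real n + 3)"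
  define B where "B = wz_weight a n"
  define H where "H = shifted_harmonic a n"
  have n: "real n = r - a - 1" and "r > 0" "c > 0"
    using assms by (simp_all add: r_def c_def)
  have "wz_G a (Suc n) = c * (B * ((real n + 1)^3 / (c * r^2))) * (H + 1/r)"
    unfolding wz_G_def wz_weight_Suc shifted_harmonic_Suc r_def[symmetric] c_def[symmetric]
      B_def[symmetric] H_def[symmetric]
    by (simp add: c_def algebra_simps)
  also have "\<dots> = B * (r - a)^3 / r^2 * (H + 1/r)"
    using \<open>r > 0\<close> \<open>c > 0\<close> by (simp add: n field_simps)
  finally have "wz_G a (Suc n) = B * (r - a)^3 / r^2 * (H + 1/r)" .
  moreover have "wz_G a n = 2 * (2*r - 2*a - 1) * B * H"
    unfolding wz_G_def B_def H_def by (simp add: n)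
  moreover have "wz_F (a + 1) n = B * a^2 / r^2 * ((3*r - a) * (H - 1/a + 1/r) - 1)"
    unfolding wz_F_def wz_weight_shift[OF assms] shifted_harmonic_shift r_def[symmetric]
      B_def[symmetric] H_def[symmetric]
    by (simp add: n algebra_simps)
  moreover have "wz_F a n = B * ((3*r - a - 2) * H - 1)"
    unfolding wz_F_def B_def H_def by (simp add: n algebra_simps)
  moreover have "B * (r - a)^3 / r^2 * (H + 1/r) - 2 * (2*r - 2*a - 1) * B * H
      = B * a^2 / r^2 * ((3*r - a) * (H - 1/a + 1/r) - 1) - B * ((3*r - a - 2) * H - 1)"
    using assms \<open>r > 0\<close> by (simp add: field_simps) algebra
  ultimately show ?thesis by simp
qed

lemma wz_F_nonneg:
  assumes "a > 0"
  shows "wz_F a n \<ge> 0"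
proof -
  have "1 \<le> 2 * a * (1 / a)"
    using assms by simp
  also have "\<dots> \<le> (3 * real n + 1 + 2 * a) * shifted_harmonic a n"
    using assms shifted_harmonic_ge[OF assms] by (intro mult_mono) auto
  finally show ?thesis
    unfolding wz_F_def using wz_weight_pos[OF assms, of n] by simp
qed

lemma wz_F_le:
  assumes "a > 0"
  shows "wz_F a n \<le> (3 + 2 * a) / a^3 * ((real n + 1)^2 * (1/4)^n)"
proof -
  have linear: "3 * real n + 1 + 2 * a \<le> (3 + 2 * a) * (real n + 1)"
    using assms by (simp add: algebra_simps)
  have "wz_F a n \<le> wz_weight a n * (3 * real n + 1 + 2 * a) * shifted_harmonic a n"
    unfolding wz_F_def using wz_weight_pos[OF assms, of n] by (simp add: algebra_simps)
  also have "\<dots> \<le> (1/4)^n / a^2 * ((3 + 2 * a) * (real n + 1)) * ((real n + 1) / a)"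
    using assms linear wz_weight_le wz_weight_pos[of a n]
      shifted_harmonic_le shifted_harmonic_pos[of a n]
    by (intro mult_mono) auto
  also have "\<dots> = (3 + 2 * a) / a^3 * ((real n + 1)^2 * (1/4)^n)"
    using assms by (simp add: field_simps power2_eq_square power3_eq_cube)
  finally show ?thesis .
qed

lemma wz_G_nonneg: "a > 0 \<Longrightarrow> wz_G a n \<ge> 0"
  unfolding wz_G_def using wz_weight_pos[of a n] shifted_harmonic_pos[of a n] by simp

lemma wz_G_le:
  assumes "a > 0"
  shows "wz_G a n \<le> 4 / a^3 * ((real n + 1)^2 * (1/4)^n)"
proof -
  have "wz_G a n \<le> (2 * (2 * (real n + 1))) * ((1/4)^n / a^2) * ((real n + 1) / a)"
    unfolding wz_G_def
    using assms wz_weight_le wz_weight_pos[of a n] shifted_harmonic_le shifted_harmonic_pos[of a n]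
    by (intro mult_mono) auto
  also have "\<dots> = 4 / a^3 * ((real n + 1)^2 * (1/4)^n)"
    using assms by (simp add: field_simps power2_eq_square power3_eq_cube)
  finally show ?thesis .
qed

lemma summable_square_times_quarter_power: "summable (\<lambda>n. (real n + 1)^2 * (1/4::real)^n)"
proof (rule summable_comparison_test_bigo)
  show "summable (\<lambda>n. norm ((1/2::real)^n))"
    by (simp add: summable_geometric)
  show "(\<lambda>n. (real n + 1)^2 * (1/4::real)^n) \<in> O(\<lambda>n. (1/2)^n)"
    by real_asymp
qed

lemma summable_wz_F:
  assumes "a > 0"
  shows "summable (wz_F a)"
proof (rule summable_comparison_test')
  show "summable (\<lambda>n. (3 + 2 * a) / a^3 * ((real n + 1)^2 * (1/4)^n))"
    by (intro summable_mult summable_square_times_quarter_power)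
  show "norm (wz_F a n) \<le> (3 + 2 * a) / a^3 * ((real n + 1)^2 * (1/4)^n)" for n
    using wz_F_nonneg[OF assms] wz_F_le[OF assms] by simp
qed

lemma wz_G_tendsto_0:
  assumes "a > 0"
  shows "wz_G a \<longlonglongrightarrow> 0"
proof (rule Lim_null_comparison)
  show "\<forall>\<^sub>F n in sequentially. norm (wz_G a n) \<le> 4 / a^3 * ((real n + 1)^2 * (1/4)^n)"
    using wz_G_nonneg[OF assms] wz_G_le[OF assms] by (intro always_eventually allI) simp
  show "(\<lambda>n. 4 / a^3 * ((real n + 1)^2 * (1/4)^n)) \<longlonglongrightarrow> 0"
    by (intro tendsto_mult_right_zero summable_LIMSEQ_zero summable_square_times_quarter_power)
qed

lemma wz_G_0: "wz_G a 0 = 2 / a^3"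
  by (simp add: wz_G_def wz_weight_0 shifted_harmonic_def power2_eq_square power3_eq_cube)

lemma suminf_wz_F_minus_shift:
  assumes "a > 0"
  shows "suminf (wz_F a) - suminf (wz_F (a + 1)) = 2 / a^3"
proof -
  have "(\<lambda>n. wz_G a (Suc n) - wz_G a n) sums (0 - wz_G a 0)"
    by (rule telescope_sums[OF wz_G_tendsto_0[OF assms]])
  then have "(\<lambda>n. wz_F (a + 1) n - wz_F a n) sums (- wz_G a 0)"
    by (simp add: wz_G_Suc_minus_wz_G[OF assms])
  moreover have "(\<lambda>n. wz_F (a + 1) n - wz_F a n) sums (suminf (wz_F (a + 1)) - suminf (wz_F a))"
    using assms by (intro sums_diff summable_sums summable_wz_F) auto
  ultimately show ?thesis
    using sums_unique2 wz_G_0 by fastforce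
qed

lemma suminf_wz_F_tendsto_0: "((\<lambda>a. suminf (wz_F a)) \<longlongrightarrow> 0) at_top"
proof (rule Lim_null_comparison)
  define S where "S = (\<Sum>n. (real n + 1)^2 * (1/4::real)^n)"
  have upper: "suminf (wz_F a) \<le> (3 + 2 * a) / a^3 * S" if "a > 0" for a
  proof -
    have "suminf (wz_F a) \<le> (\<Sum>n. (3 + 2 * a) / a^3 * ((real n + 1)^2 * (1/4)^n))"
      using that by (intro suminf_le wz_F_le summable_wz_F summable_mult
          summable_square_times_quarter_power)
    also have "\<dots> = (3 + 2 * a) / a^3 * S"
      unfolding S_def by (rule suminf_mult[OF summable_square_times_quarter_power])
    finally show ?thesis .
  qed
  have nonneg: "suminf (wz_F a) \<ge> 0" if "a > 0" for a
    using that by (intro suminf_nonneg summable_wz_F wz_F_nonneg)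
  show "\<forall>\<^sub>F a in at_top. norm (suminf (wz_F a)) \<le> (3 + 2 * a) / a^3 * S"
    using eventually_gt_at_top[of "0::real"] by (rule eventually_mono) (use upper nonneg in auto)
  have "((\<lambda>a::real. (3 + 2 * a) / a^3) \<longlongrightarrow> 0) at_top"
    by real_asymp
  then show "((\<lambda>a. (3 + 2 * a) / a^3 * S) \<longlongrightarrow> 0) at_top"
    by (rule tendsto_mult_left_zero)
qed

lemma sums_inverse_odd_cubes: "(\<lambda>k. 1 / (2 * real k + 1)^3) sums (7 * apery_zeta3 / 8)"
proof -
  define f where "f j = 1 / (real (Suc j))^3" for j
  have "summable (\<lambda>n. inverse (real n ^ 3))"
    by (rule inverse_power_summable) simp
  then have "summable f"
    unfolding f_def by (subst (asm) summable_Suc_iff[symmetric]) (simp add: inverse_eq_divide)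
  then have zeta: "f sums apery_zeta3"
    unfolding apery_zeta3_def f_def[symmetric] by (rule summable_sums)
  have pair: "sum f {k * 2 ..< k * 2 + 2} = 1 / (2 * real k + 1)^3 + f k / 8" for k
  proof -
    have "{k * 2 ..< k * 2 + 2} = {2 * k, 2 * k + 1}" by auto
    then show ?thesis
      unfolding f_def by (simp add: field_simps power3_eq_cube)
  qed
  have "(\<lambda>k. 1 / (2 * real k + 1)^3 + f k / 8) sums apery_zeta3"
    using sums_group[OF zeta, of 2] unfolding pair by simp
  from sums_diff[OF this sums_divide[OF zeta, of 8]] show ?thesis
    by simp
qed

lemma shifted_harmonic_half: "shifted_harmonic (1/2) n = 2 * odd_harmonic (n + 1)"
proof (induction n)
  case 0
  show ?case by (simp add: shifted_harmonic_def odd_harmonic_def)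
next
  case (Suc n)
  have "1 / (1/2 + real n + 1) = 2 * (1 / (2 * (real n + 2) - 1))"
    by (simp add: field_simps)
  with Suc.IH show ?case
    by (simp add: shifted_harmonic_Suc odd_harmonic_def)
qed

lemma wz_F_half:
  "wz_F (1/2) n = 4 * ((1/4)^n * pochhammer 1 n ^ 3 / pochhammer (3/2) n ^ 3
                       * ((6 * real n + 4) * odd_harmonic (n + 1) - 1))"
proof -
  have half: "pochhammer (1/2::real) (Suc n) = pochhammer (3/2) n / 2"
    by (simp add: pochhammer_rec)
  have "pochhammer (3/2::real) n \<noteq> 0"
    by (simp add: pochhammer_eq_0_iff)
  then show ?thesis
    unfolding wz_F_def wz_weight_def shifted_harmonic_half half
    by (simp add: pochhammer_fact field_simps power2_eq_square power3_eq_cube)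
qed

theorem mainTheorem3:
  shows "(\<lambda>n. (1/4) ^ n * (pochhammer (1::real) n) ^ 3 / (pochhammer (3/2::real) n) ^ 3
              * ((6 * real n + 4) * odd_harmonic (n + 1) - 1))
         sums (7 * apery_zeta3 / 2)"
proof -
  define U where "U a = suminf (wz_F a)" for a
  have "filterlim (\<lambda>k. real k + 1/2) at_top sequentially"
    by real_asymp
  then have "(\<lambda>k. U (real k + 1/2)) \<longlonglongrightarrow> 0"
    unfolding U_def using suminf_wz_F_tendsto_0 by (rule filterlim_compose[rotated])
  then have "(\<lambda>k. U (real k + 1/2) - U (real (Suc k) + 1/2)) sums U (1/2)"
    using telescope_sums' by fastforce
  moreover have "U (real k + 1/2) - U (real (Suc k) + 1/2) = 16 * (1 / (2 * real k + 1)^3)" for k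
    using suminf_wz_F_minus_shift[of "real k + 1/2"]
    by (simp add: U_def add_ac field_simps power3_eq_cube)
  ultimately have "U (1/2) = 16 * (7 * apery_zeta3 / 8)"
    using sums_unique2 sums_mult[OF sums_inverse_odd_cubes, of 16] by simp
  moreover have "wz_F (1/2) sums U (1/2)"
    unfolding U_def by (intro summable_sums summable_wz_F) simp
  ultimately have "wz_F (1/2) sums (14 * apery_zeta3)"
    by simp
  from sums_divide[OF this, of 4] show ?thesis
    by (simp add: wz_F_half)
qed

end
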